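(* Let $n\ge2$ be an integer, $\alpha=1-\frac1n$, and let $\beta\le0$ be real with $Q\equiv\alpha-\beta-1\le1$. There is a constant $C_n>0$ depending only on $n$ such that for all such $\beta$ and all $y\le-1$, $$C_n^{-1}e^y(-y)^{\beta-\alpha}\le\mathcal{T}(\beta,\alpha,y)\le e^y(-y)^{\beta-\alpha},\qquad C_n^{-1}(-y)^{-\beta}\le\mathcal{M}(\beta,\alpha,y)\le C_n(-y)^{-\beta}.$$
   Context: $(x)_k=\prod_{m=1}^k(x+m-1)$, $(x)_0=1$. $\mathcal{M}(\beta,\alpha,y)=\sum_{k\ge0}\frac{(\beta)_k}{(\alpha)_k}\frac{y^k}{k!}$. For $y<0$, $\mathcal{T}(\beta,\alpha,y)=\frac{e^y}{\Gamma(\alpha-\beta)}\int_0^\infty e^{yt}t^{\alpha-\beta-1}(1+t)^{\beta-1}dt$. *)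

theory Defs
  imports "HOL-Analysis.Analysis"
begin

definition kummerM :: "real \<Rightarrow> real \<Rightarrow> real \<Rightarrow> real" where
  "kummerM \<beta> \<alpha> y = (\<Sum>k. pochhammer \<beta> k / pochhammer \<alpha> k * y ^ k / fact k)"

definition tricomiT :: "real \<Rightarrow> real \<Rightarrow> real \<Rightarrow> real" where
  "tricomiT \<beta> \<alpha> y = exp y / Gamma (\<alpha> - \<beta>) *
     (LBINT t:{0<..}. exp (y * t) * t powr (\<alpha> - \<beta> - 1) * (1 + t) powr (\<beta> - 1))"

end

theory Submission
  imports Defs
begin

text \<open>
  Write \<open>x = -y \<ge> 1\<close> and \<open>b = -\<beta>\<close>. Bounding the factor \<open>(1 + t) powr (\<beta> - 1)\<close> of the
  integrand of T between \<open>exp ((\<beta> - 1) * t)\<close> and 1 reduces T to two Gamma integrals, whose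
  values \<open>Gamma (\<alpha> - \<beta>) * c powr (\<beta> - \<alpha>)\<close> with \<open>c = x\<close> and \<open>c = x + 1 + b \<le> 4 x\<close> give both
  bounds for T.

  For M, a Cauchy product with the exponential series and the Chu-Vandermonde identity give
  Kummer's transformation \<open>exp x * M(\<beta>, \<alpha>, -x) = \<Sum>k. (\<alpha> + b)\<^sub>k / (\<alpha>)\<^sub>k * x\<^sup>k / k!\<close>, a series
  with positive terms. For \<open>\<alpha> \<in> [1/2, 1]\<close> and \<open>b \<in> [0, 2]\<close> the coefficient ratio is comparable
  to \<open>(k + 1) powr b\<close>, by Bernoulli-type estimates on its factors \<open>1 + b / (\<alpha> + i)\<close>. Finally the
  Poisson average of \<open>(k + 1) powr b\<close> is comparable to \<open>x powr b * exp x\<close>: with \<open>s = (k + 1) / x\<close>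
  one has \<open>s - s\<^sup>2/4 - 1/4 \<le> s powr b \<le> 1 + s\<^sup>2\<close>, and the Poisson averages of these quadratics
  are explicit.
\<close>

section \<open>Gamma integrals and the bounds for T\<close>

lemma has_bochner_integral_Gamma:
  fixes a :: real
  assumes "a > 0"
  shows "has_bochner_integral lborel (\<lambda>t. indicator {0<..} t * (t powr (a - 1) / exp t)) (Gamma a)"
proof (rule has_bochner_integral_nn_integral)
  have "integral\<^sup>N lborel (\<lambda>t. ennreal (t powr (a - 1) / exp t) * indicator {0..} t) = ennreal (Gamma a)"
    using Gamma_integral_real[OF assms] by (intro nn_integral_has_integral_lebesgue') auto
  \<comment> \<open>The endpoint 0 does not matter because \<open>0 powr _ = 0\<close>.\<close>
  moreover have "indicator {0..} t * (t powr (a - 1) / exp t) = indicator {0<..} t * (t powr (a - 1) / exp t)"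
    for t :: real
    by (cases "t = 0") (auto simp: indicator_def)
  ultimately show "(\<integral>\<^sup>+t. ennreal (indicator {0<..} t * (t powr (a - 1) / exp t)) \<partial>lborel) = ennreal (Gamma a)"
    by (metis (no_types, lifting) ennreal_mult' ennreal_indicator indicator_pos_le mult.commute nn_integral_cong)
qed (use assms in \<open>auto intro: less_imp_le\<close>)

lemma has_bochner_integral_exp_powr:
  fixes a y :: real
  assumes "a > 0" "y < 0"
  shows "has_bochner_integral lborel (\<lambda>t. indicator {0<..} t * (exp (y * t) * t powr (a - 1)))
           (Gamma a * (-y) powr (-a))"
proof -
  define c where "c = -y"
  have c: "c > 0" using assms by (simp add: c_def)
  have "has_bochner_integral lborel
      (\<lambda>t. indicator {0<..} (0 + c * t) * ((0 + c * t) powr (a - 1) / exp (0 + c * t))) (Gamma a /\<^sub>R \<bar>c\<bar>)"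
    using has_bochner_integral_Gamma[OF assms(1)] c
    by (subst (asm) lborel_has_bochner_integral_real_affine_iff[where c = c and t = 0]) auto
  moreover have "indicator {0<..} (0 + c * t) * ((0 + c * t) powr (a - 1) / exp (0 + c * t))
      = c powr (a - 1) * (indicator {0<..} t * (exp (y * t) * t powr (a - 1)))" for t
  proof (cases "t > 0")
    case True
    have "exp (y * t) = inverse (exp (c * t))"
      by (simp add: c_def exp_minus)
    then show ?thesis
      using True c by (simp add: powr_mult divide_inverse mult_ac)
  qed (use c in \<open>simp add: zero_less_mult_iff\<close>)
  ultimately have "has_bochner_integral lborel
      (\<lambda>t. c powr (1 - a) * (c powr (a - 1) * (indicator {0<..} t * (exp (y * t) * t powr (a - 1)))))
      (c powr (1 - a) * (Gamma a / c))"
    using c by (intro has_bochner_integral_mult_right) (simp add: divide_inverse mult.commute)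
  moreover have "c powr (1 - a) * c powr (a - 1) = 1"
    using c by (simp flip: powr_add)
  moreover have "c powr (1 - a) * (Gamma a / c) = Gamma a * (-y) powr (-a)"
    using c by (simp add: c_def powr_diff powr_minus field_simps)
  ultimately show ?thesis
    by (simp only: mult.assoc[symmetric] mult_1)
qed

lemma set_integral_exp_powr:
  fixes a y :: real
  assumes "a > 0" "y < 0"
  shows "set_integrable lborel {0<..} (\<lambda>t. exp (y * t) * t powr (a - 1))"
    and "(LBINT t:{0<..}. exp (y * t) * t powr (a - 1)) = Gamma a * (-y) powr (-a)"
  using has_bochner_integral_exp_powr[OF assms]
  unfolding set_integrable_def set_lebesgue_integral_def has_bochner_integral_iff
  by simp_all

lemma tricomiT_bounds:
  fixes \<alpha> \<beta> y :: real
  assumes "\<beta> < \<alpha>" "\<beta> \<le> 1" "y < 0"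
  shows "exp y * (1 - \<beta> - y) powr (\<beta> - \<alpha>) \<le> tricomiT \<beta> \<alpha> y"
    and "tricomiT \<beta> \<alpha> y \<le> exp y * (-y) powr (\<beta> - \<alpha>)"
proof -
  define a where "a = \<alpha> - \<beta>"
  define F where "F t = exp (y * t) * t powr (a - 1) * (1 + t) powr (\<beta> - 1)" for t
  have a: "a > 0" and G: "Gamma a > 0"
    using assms by (simp_all add: a_def)
  have T: "tricomiT \<beta> \<alpha> y = exp y / Gamma a * (LBINT t:{0<..}. F t)"
    by (simp add: tricomiT_def F_def a_def)
  note upper = set_integral_exp_powr[OF a \<open>y < 0\<close>]
  note lower = set_integral_exp_powr[OF a, of "y + \<beta> - 1"]
  have F_nonneg: "0 \<le> F t" for t
    by (simp add: F_def)
  have F_le: "F t \<le> exp (y * t) * t powr (a - 1)" if "t > 0" for t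
  proof -
    have "(1 + t) powr (\<beta> - 1) \<le> (1 + t) powr 0"
      using that assms by (intro powr_mono) auto
    then show ?thesis
      unfolding F_def using that by (intro mult_left_le) auto
  qed
  have F_ge: "exp ((y + \<beta> - 1) * t) * t powr (a - 1) \<le> F t" if "t > 0" for t
  proof -
    have "(\<beta> - 1) * t \<le> (\<beta> - 1) * ln (1 + t)"
      using that assms ln_add_one_self_le_self[of t] by (intro mult_left_mono_neg) auto
    then have "exp ((\<beta> - 1) * t) \<le> (1 + t) powr (\<beta> - 1)"
      using that by (simp add: powr_def mult.commute)
    moreover have "exp ((y + \<beta> - 1) * t) = exp (y * t) * exp ((\<beta> - 1) * t)"
      by (simp flip: exp_add add: algebra_simps)
    ultimately show ?thesis
      unfolding F_def by (simp add: mult_left_mono mult_ac)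
  qed
  have F_integrable: "set_integrable lborel {0<..} F"
  proof (rule set_integrable_bound[OF upper(1)])
    show "set_borel_measurable lborel {0<..} F"
      unfolding set_borel_measurable_def F_def by measurable
  qed (auto simp: F_le F_nonneg indicator_def)
  have "(LBINT t:{0<..}. F t) \<le> Gamma a * (-y) powr (-a)"
    using set_integral_mono[OF F_integrable upper(1)] F_le upper(2) by simp
  then show "tricomiT \<beta> \<alpha> y \<le> exp y * (-y) powr (\<beta> - \<alpha>)"
    unfolding T using G by (simp add: a_def field_simps)
  have "Gamma a * (1 - \<beta> - y) powr (-a) \<le> (LBINT t:{0<..}. F t)"
    using set_integral_mono[OF lower(1) F_integrable] F_ge lower(2) assms by (simp add: diff_diff_eq add.commute)
  then show "exp y * (1 - \<beta> - y) powr (\<beta> - \<alpha>) \<le> tricomiT \<beta> \<alpha> y"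
    unfolding T using G by (simp add: a_def field_simps)
qed

lemma tricomiT_lower_bound:
  fixes \<alpha> \<beta> y :: real
  assumes "0 < \<alpha>" "\<beta> \<le> 0" "\<alpha> - \<beta> \<le> 2" "y \<le> -1"
  shows "exp y * (-y) powr (\<beta> - \<alpha>) / 16 \<le> tricomiT \<beta> \<alpha> y"
proof -
  have "(-y) powr (\<beta> - \<alpha>) / 16 = 4 powr (-2) * (-y) powr (\<beta> - \<alpha>)"
    by (simp add: powr_minus)
  also have "\<dots> \<le> 4 powr (\<beta> - \<alpha>) * (-y) powr (\<beta> - \<alpha>)"
    using assms by (intro mult_right_mono powr_mono) auto
  also have "\<dots> = (4 * (-y)) powr (\<beta> - \<alpha>)"
    using assms by (simp add: powr_mult[symmetric])
  also have "\<dots> \<le> (1 - \<beta> - y) powr (\<beta> - \<alpha>)"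
    using assms by (intro powr_mono2') auto
  finally have "exp y * ((-y) powr (\<beta> - \<alpha>) / 16) \<le> exp y * (1 - \<beta> - y) powr (\<beta> - \<alpha>)"
    by simp
  also have "\<dots> \<le> tricomiT \<beta> \<alpha> y"
    using assms by (intro tricomiT_bounds) auto
  finally show ?thesis by simp
qed

section \<open>Kummer's transformation\<close>

lemma Vandermonde_pochhammer_binomial:
  fixes a c :: "'a::field_char_0"
  assumes "\<And>i. i < n \<Longrightarrow> c \<noteq> - of_nat i"
  shows "(\<Sum>j\<le>n. of_nat (n choose j) * (- 1) ^ j * pochhammer a j / pochhammer c j)
           = pochhammer (c - a) n / pochhammer c n"
proof -
  have "of_nat (n choose j) * (- 1) ^ j = pochhammer (- of_nat n) j / (fact j :: 'a)" for j
    by (simp add: binomial_gbinomial gbinomial_pochhammer)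
  then show ?thesis
    using Vandermonde_pochhammer[of n c a] assms
    by (simp add: atMost_atLeast0 mult_ac)
qed

lemma exp_series_sums: "(\<lambda>n. x ^ n / fact n) sums exp (x :: real)"
  using exp_converges[of x] by (simp add: divide_inverse scaleR_conv_of_real mult.commute)

lemma abs_pochhammer_le:
  fixes \<alpha> \<beta> :: real
  assumes "\<alpha> > 0"
  shows "\<bar>pochhammer \<beta> j\<bar> \<le> max 1 (\<bar>\<beta>\<bar> / \<alpha>) ^ j * pochhammer \<alpha> j"
proof (induction j)
  case (Suc j)
  define K where "K = max 1 (\<bar>\<beta>\<bar> / \<alpha>)"
  have "\<bar>\<beta>\<bar> / \<alpha> \<le> K"
    by (simp add: K_def)
  then have "\<bar>\<beta>\<bar> \<le> K * \<alpha>"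
    using assms by (simp add: divide_le_eq)
  moreover have "real j \<le> K * real j"
    using mult_right_mono[OF max.cobounded1, of "real j" 1] by (simp add: K_def)
  ultimately
  have factor: "\<bar>\<beta> + real j\<bar> \<le> K * (\<alpha> + real j)"
    by (simp add: distrib_left abs_triangle_ineq[THEN order_trans])
  have "\<bar>pochhammer \<beta> (Suc j)\<bar> = \<bar>pochhammer \<beta> j\<bar> * \<bar>\<beta> + real j\<bar>"
    by (simp add: pochhammer_Suc abs_mult)
  also have "\<dots> \<le> (K ^ j * pochhammer \<alpha> j) * (K * (\<alpha> + real j))"
    using Suc.IH factor by (intro mult_mono) (auto simp: K_def)
  also have "\<dots> = K ^ Suc j * pochhammer \<alpha> (Suc j)"
    by (simp add: pochhammer_Suc)
  finally show ?case by (simp add: K_def)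
qed simp

lemma summable_kummer_series:
  fixes \<alpha> \<beta> y :: real
  assumes "\<alpha> > 0"
  shows "summable (\<lambda>j. norm (pochhammer \<beta> j / pochhammer \<alpha> j * y ^ j / fact j))"
proof (rule summable_comparison_test')
  define K where "K = max 1 (\<bar>\<beta>\<bar> / \<alpha>)"
  show "summable (\<lambda>j. (K * \<bar>y\<bar>) ^ j / fact j)"
    using exp_series_sums by (rule sums_summable)
  fix j :: nat
  have pos: "pochhammer \<alpha> j > 0"
    using assms by (simp add: pochhammer_pos)
  have "\<bar>pochhammer \<beta> j\<bar> / pochhammer \<alpha> j \<le> K ^ j"
    using abs_pochhammer_le[OF assms, of \<beta> j] pos by (simp add: K_def divide_le_eq)
  then have "\<bar>pochhammer \<beta> j\<bar> / pochhammer \<alpha> j * (\<bar>y\<bar> ^ j / fact j) \<le> K ^ j * (\<bar>y\<bar> ^ j / fact j)"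
    by (intro mult_right_mono) auto
  then show "norm (norm (pochhammer \<beta> j / pochhammer \<alpha> j * y ^ j / fact j)) \<le> (K * \<bar>y\<bar>) ^ j / fact j"
    using pos by (simp add: abs_mult power_abs power_mult_distrib)
qed

lemma kummer_transformation_sums:
  fixes \<alpha> \<beta> y :: real
  assumes "\<alpha> > 0"
  shows "(\<lambda>k. pochhammer (\<alpha> - \<beta>) k / pochhammer \<alpha> k * ((-y) ^ k / fact k))
           sums (exp (-y) * kummerM \<beta> \<alpha> y)"
proof -
  define a where "a i = (-y) ^ i / fact i" for i
  define b where "b j = pochhammer \<beta> j / pochhammer \<alpha> j * y ^ j / fact j" for j
  have "summable (\<lambda>i. norm (a i))"
    using sums_summable[OF exp_series_sums[of "\<bar>y\<bar>"]] by (simp add: a_def power_abs)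
  moreover have "summable (\<lambda>j. norm (b j))"
    unfolding b_def using assms by (rule summable_kummer_series)
  ultimately have "(\<lambda>k. \<Sum>i\<le>k. a i * b (k - i)) sums ((\<Sum>i. a i) * (\<Sum>j. b j))"
    by (rule Cauchy_product_sums)
  moreover have "(\<Sum>i. a i) = exp (-y)"
    using exp_series_sums[of "-y"] by (simp add: a_def sums_iff)
  moreover have "(\<Sum>j. b j) = kummerM \<beta> \<alpha> y"
    by (simp add: b_def kummerM_def)
  moreover have "(\<Sum>i\<le>k. a i * b (k - i))
      = pochhammer (\<alpha> - \<beta>) k / pochhammer \<alpha> k * ((-y) ^ k / fact k)" for k
  proof -
    have summand: "a (k - j) * b j = (-y) ^ k / fact k *
        (of_nat (k choose j) * (- 1) ^ j * pochhammer \<beta> j / pochhammer \<alpha> j)" if "j \<le> k" for j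
    proof -
      have "(-y) ^ k = (-y) ^ (k - j) * (-y) ^ j"
        using that by (simp flip: power_add)
      also have "(-y) ^ j = (- 1) ^ j * y ^ j"
        by (rule power_minus)
      finally have "(-y) ^ k = (-y) ^ (k - j) * (- 1) ^ j * y ^ j"
        by (simp only: mult.assoc)
      then show ?thesis
        using that by (simp add: a_def b_def binomial_fact field_simps)
    qed
    have "(\<Sum>i\<le>k. a i * b (k - i)) = (\<Sum>j\<le>k. a (k - j) * b j)"
      by (rule sum.reindex_bij_witness[where i="\<lambda>j. k - j" and j="\<lambda>j. k - j"]) auto
    also have "\<dots> = (-y) ^ k / fact k *
        (\<Sum>j\<le>k. of_nat (k choose j) * (- 1) ^ j * pochhammer \<beta> j / pochhammer \<alpha> j)"
      using summand by (simp add: sum_distrib_left)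
    also have "\<dots> = pochhammer (\<alpha> - \<beta>) k / pochhammer \<alpha> k * ((-y) ^ k / fact k)"
      using assms by (subst Vandermonde_pochhammer_binomial) (auto simp: mult_ac)
    finally show ?thesis .
  qed
  ultimately show ?thesis by simp
qed

section \<open>Poisson averages of powers\<close>

lemma exp_series_times_nat_sums:
  fixes x s :: real
  assumes "(\<lambda>n. g (Suc n) * (x ^ n / fact n)) sums s"
  shows "(\<lambda>n. real n * g n * (x ^ n / fact n)) sums (x * s)"
proof -
  have "(\<lambda>n. x * (g (Suc n) * (x ^ n / fact n))) sums (x * s)"
    using assms by (rule sums_mult)
  then have "(\<lambda>n. real (Suc n) * g (Suc n) * (x ^ Suc n / fact (Suc n))) sums (x * s)"
    by (rule sums_cong[THEN iffD1, rotated]) (simp add: field_simps del: of_nat_Suc)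
  then show ?thesis
    using sums_Suc[where f = "\<lambda>n. real n * g n * (x ^ n / fact n)"] by simp
qed

lemma exp_series_Suc_sums:
  "(\<lambda>n. (real n + 1) * (x ^ n / fact n)) sums ((x + 1) * exp (x :: real))"
proof -
  have "(\<lambda>n. real n * 1 * (x ^ n / fact n) + x ^ n / fact n) sums (x * exp x + exp x)"
    using exp_series_times_nat_sums[of "\<lambda>_. 1"] exp_series_sums by (intro sums_add) auto
  also have "x * exp x + exp x = (x + 1) * exp x"
    by (simp add: algebra_simps)
  finally show ?thesis
    by (rule sums_cong[THEN iffD1, rotated]) (simp add: algebra_simps add_divide_distrib)
qed

lemma exp_series_Suc_square_sums:
  "(\<lambda>n. (real n + 1)\<^sup>2 * (x ^ n / fact n)) sums ((x\<^sup>2 + 3 * x + 1) * exp (x :: real))"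
proof -
  have "(\<lambda>n. real (Suc n) * (x ^ n / fact n)) sums ((x + 1) * exp x)"
    by (rule sums_cong[THEN iffD1, OF _ exp_series_Suc_sums]) simp
  then have "(\<lambda>n. real n * real n * (x ^ n / fact n)) sums (x * ((x + 1) * exp x))"
    by (rule exp_series_times_nat_sums)
  moreover have "(\<lambda>n. real n * 1 * (x ^ n / fact n)) sums (x * exp x)"
    using exp_series_times_nat_sums[of "\<lambda>_. 1"] exp_series_sums by simp
  ultimately have "(\<lambda>n. real n * real n * (x ^ n / fact n) + 2 * (real n * 1 * (x ^ n / fact n))
      + x ^ n / fact n) sums (x * ((x + 1) * exp x) + 2 * (x * exp x) + exp x)"
    by (intro sums_add sums_mult exp_series_sums)
  also have "x * ((x + 1) * exp x) + 2 * (x * exp x) + exp x = (x\<^sup>2 + 3 * x + 1) * exp x"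
    by (simp add: power2_eq_square algebra_simps)
  finally show ?thesis
    by (rule sums_cong[THEN iffD1, rotated]) (simp add: power2_eq_square algebra_simps)
qed

lemma summable_exp_series_powr:
  fixes x b :: real
  assumes "0 \<le> x" "b \<le> 2"
  shows "summable (\<lambda>k. (real k + 1) powr b * (x ^ k / fact k))"
proof (rule summable_comparison_test')
  show "summable (\<lambda>k. (real k + 1)\<^sup>2 * (x ^ k / fact k))"
    using exp_series_Suc_square_sums by (rule sums_summable)
  fix k
  have "(real k + 1) powr b \<le> (real k + 1) powr 2"
    using assms by (intro powr_mono) auto
  then have "(real k + 1) powr b * (x ^ k / fact k) \<le> (real k + 1)\<^sup>2 * (x ^ k / fact k)"
    using assms by (intro mult_right_mono) (simp_all add: powr_realpow)
  then show "norm ((real k + 1) powr b * (x ^ k / fact k)) \<le> (real k + 1)\<^sup>2 * (x ^ k / fact k)"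
    using assms by simp
qed

lemma powr_le_one_plus_square:
  fixes s b :: real
  assumes "0 \<le> s" "0 \<le> b" "b \<le> 2"
  shows "s powr b \<le> 1 + s\<^sup>2"
proof (cases "s \<le> 1")
  case True
  then have "s powr b \<le> 1 powr b"
    using assms by (intro powr_mono2) auto
  then have "s powr b \<le> 1"
    by simp
  then show ?thesis
    using zero_le_power2[of s] by linarith
next
  case False
  then have "s powr b \<le> s powr 2"
    using assms by (intro powr_mono) auto
  then show ?thesis
    using False by (simp add: powr_realpow)
qed

lemma quadratic_le_powr:
  fixes s b :: real
  assumes "0 < s" "0 \<le> b" "b \<le> 2"
  shows "s - s\<^sup>2 / 4 - 1 / 4 \<le> s powr b"
proof (cases "s \<le> 1")
  case True
  have "s - s\<^sup>2 / 4 - 1 / 4 \<le> s\<^sup>2"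
    using zero_le_power2[of "s - 2 / 5"] by (simp add: power2_eq_square algebra_simps)
  also have "s\<^sup>2 = s powr 2"
    using assms by (simp add: powr_realpow)
  also have "\<dots> \<le> s powr b"
    using True assms by (intro powr_mono') auto
  finally show ?thesis .
next
  case False
  have "s - s\<^sup>2 / 4 - 1 / 4 \<le> 1"
    using zero_le_power2[of "s - 2"] by (simp add: power2_eq_square algebra_simps)
  also have "1 \<le> s powr b"
    using False assms by (simp add: ge_one_powr_ge_zero)
  finally show ?thesis .
qed

lemma exp_series_powr_le:
  fixes x b :: real
  assumes "1 \<le> x" "0 \<le> b" "b \<le> 2"
  shows "(\<Sum>k. (real k + 1) powr b * (x ^ k / fact k)) \<le> 6 * x powr b * exp x"
proof -
  define E where "E k = x ^ k / fact k" for k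
  have term_le: "(real k + 1) powr b * E k \<le> x powr b * (E k + (real k + 1)\<^sup>2 * E k / x\<^sup>2)" for k
  proof -
    have "(real k + 1) powr b = x powr b * ((real k + 1) / x) powr b"
      using assms by (simp add: powr_divide)
    also have "\<dots> \<le> x powr b * (1 + ((real k + 1) / x)\<^sup>2)"
      using assms by (intro mult_left_mono powr_le_one_plus_square) auto
    finally have "(real k + 1) powr b * E k \<le> x powr b * (1 + ((real k + 1) / x)\<^sup>2) * E k"
      using assms by (intro mult_right_mono) (auto simp: E_def)
    also have "\<dots> = x powr b * (E k + (real k + 1)\<^sup>2 * E k / x\<^sup>2)"
      using assms by (simp add: field_simps)
    finally show ?thesis .
  qed
  have "(\<lambda>k. (real k + 1) powr b * E k) sums (\<Sum>k. (real k + 1) powr b * E k)"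
    using summable_exp_series_powr[of x b] assms by (simp add: E_def summable_sums)
  moreover have "(\<lambda>k. x powr b * (E k + (real k + 1)\<^sup>2 * E k / x\<^sup>2))
      sums (x powr b * (exp x + (x\<^sup>2 + 3 * x + 1) * exp x / x\<^sup>2))"
    unfolding E_def by (intro sums_mult sums_add sums_divide exp_series_sums exp_series_Suc_square_sums)
  ultimately have "(\<Sum>k. (real k + 1) powr b * E k) \<le> x powr b * (exp x + (x\<^sup>2 + 3 * x + 1) * exp x / x\<^sup>2)"
    by (rule sums_le[OF term_le])
  also have "\<dots> = x powr b * exp x * (1 + (x\<^sup>2 + 3 * x + 1) / x\<^sup>2)"
    by (simp add: algebra_simps)
  also have "\<dots> \<le> x powr b * exp x * 6"
  proof (rule mult_left_mono)
    have "x \<le> x * x"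
      using assms mult_right_mono[OF assms(1), of x] by simp
    then have "x\<^sup>2 + 3 * x + 1 \<le> 5 * x\<^sup>2"
      using assms unfolding power2_eq_square by linarith
    then show "1 + (x\<^sup>2 + 3 * x + 1) / x\<^sup>2 \<le> 6"
      using assms by (simp add: divide_le_eq)
  qed simp
  finally show ?thesis
    by (simp add: E_def mult_ac)
qed

lemma exp_series_powr_ge:
  fixes x b :: real
  assumes "1 \<le> x" "0 \<le> b" "b \<le> 2"
  shows "x powr b * exp x / 2 \<le> (\<Sum>k. (real k + 1) powr b * (x ^ k / fact k))"
proof -
  define E where "E k = x ^ k / fact k" for k
  have term_ge: "x powr b * ((real k + 1) * E k / x - (real k + 1)\<^sup>2 * E k / (4 * x\<^sup>2) - E k / 4)
      \<le> (real k + 1) powr b * E k" for k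
  proof -
    have "x powr b * ((real k + 1) / x - ((real k + 1) / x)\<^sup>2 / 4 - 1 / 4) \<le> x powr b * ((real k + 1) / x) powr b"
      using assms by (intro mult_left_mono quadratic_le_powr) auto
    also have "\<dots> = (real k + 1) powr b"
      using assms by (simp add: powr_divide)
    finally have "x powr b * ((real k + 1) / x - ((real k + 1) / x)\<^sup>2 / 4 - 1 / 4) * E k \<le> (real k + 1) powr b * E k"
      using assms by (intro mult_right_mono) (auto simp: E_def)
    moreover have "x powr b * ((real k + 1) / x - ((real k + 1) / x)\<^sup>2 / 4 - 1 / 4) * E k
        = x powr b * ((real k + 1) * E k / x - (real k + 1)\<^sup>2 * E k / (4 * x\<^sup>2) - E k / 4)"
      using assms by (simp add: field_simps)
    ultimately show ?thesis
      by simp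
  qed
  have "(x + 1) / x - (x\<^sup>2 + 3 * x + 1) / (4 * x\<^sup>2) - 1 / 4 = (2 * x\<^sup>2 + x - 1) / (4 * x\<^sup>2)"
    using assms by (simp add: field_simps power2_eq_square)
  also have "\<dots> \<ge> 1 / 2"
    using assms by (simp add: field_simps)
  finally have "x powr b * exp x * (1 / 2)
      \<le> x powr b * exp x * ((x + 1) / x - (x\<^sup>2 + 3 * x + 1) / (4 * x\<^sup>2) - 1 / 4)"
    by (intro mult_left_mono) auto
  also have "\<dots> = x powr b * ((x + 1) * exp x / x - (x\<^sup>2 + 3 * x + 1) * exp x / (4 * x\<^sup>2) - exp x / 4)"
    by (simp add: algebra_simps)
  also have "\<dots> \<le> (\<Sum>k. (real k + 1) powr b * E k)"
  proof (rule sums_le[OF term_ge])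
    show "(\<lambda>k. x powr b * ((real k + 1) * E k / x - (real k + 1)\<^sup>2 * E k / (4 * x\<^sup>2) - E k / 4))
        sums (x powr b * ((x + 1) * exp x / x - (x\<^sup>2 + 3 * x + 1) * exp x / (4 * x\<^sup>2) - exp x / 4))"
      unfolding E_def
      by (intro sums_mult sums_diff sums_divide exp_series_sums exp_series_Suc_sums exp_series_Suc_square_sums)
    show "(\<lambda>k. (real k + 1) powr b * E k) sums (\<Sum>k. (real k + 1) powr b * E k)"
      using summable_exp_series_powr[of x b] assms by (simp add: E_def summable_sums)
  qed
  finally show ?thesis
    by (simp add: E_def)
qed

section \<open>Ratios of Pochhammer symbols and the bounds for M\<close>

lemma pochhammer_ratio_Suc:
  fixes \<alpha> b :: real
  assumes "\<alpha> > 0"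
  shows "pochhammer (\<alpha> + b) (Suc k) / pochhammer \<alpha> (Suc k)
           = pochhammer (\<alpha> + b) k / pochhammer \<alpha> k * (1 + b / (\<alpha> + real k))"
  using assms pochhammer_pos[of \<alpha> k] by (simp add: pochhammer_Suc field_simps)

lemma pochhammer_add_one_ratio:
  fixes \<alpha> :: real
  assumes "\<alpha> > 0"
  shows "pochhammer (\<alpha> + 1) k / pochhammer \<alpha> k = (\<alpha> + k) / \<alpha>"
  using assms pochhammer_pos[of \<alpha> k] pochhammer_rec[of \<alpha> k] pochhammer_Suc[of \<alpha> k]
  by (simp add: field_simps)

lemma powr_telescope:
  fixes p q r b :: real
  assumes "p > 0" "q > 0" "r > 0"
  shows "(q / p) powr b * (r / q) powr b = (r / p) powr b"
  using assms by (simp flip: powr_mult)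

lemma one_plus_div_Suc_le_powr:
  fixes p b :: real
  assumes "p > 0" "b \<ge> 0"
  shows "1 + b / (p + 1) \<le> ((p + 1) / p) powr b"
proof -
  have "1 / (p + 1) \<le> ln (1 / p + 1)"
    using ln_add1_ge[of "1 / p"] assms by (simp add: field_simps)
  then have "b / (p + 1) \<le> b * ln ((p + 1) / p)"
    using assms mult_left_mono by (fastforce simp: field_simps)
  then have "1 + b / (p + 1) \<le> exp (b * ln ((p + 1) / p))"
    using exp_ge_add_one_self[of "b * ln ((p + 1) / p)"] by linarith
  then show ?thesis
    using assms by (simp add: powr_def mult.commute)
qed

lemma powr_le_one_plus_div:
  fixes p b :: real
  assumes "p > 0" "0 \<le> b" "b \<le> 1"
  shows "((p + 1) / p) powr b \<le> 1 + b / p"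
  using Youngs_inequality_0[of b "1 - b" "(p + 1) / p" 1] assms
  by (simp add: field_simps)

lemma powr_le_pochhammer_ratio:
  fixes \<alpha> b :: real
  assumes "\<alpha> > 0" "0 \<le> b" "b \<le> 1"
  shows "((\<alpha> + k) / \<alpha>) powr b \<le> pochhammer (\<alpha> + b) k / pochhammer \<alpha> k"
proof (induction k)
  case (Suc k)
  have pos: "\<alpha> + real k > 0"
    using assms by simp
  have "((\<alpha> + Suc k) / \<alpha>) powr b = ((\<alpha> + k) / \<alpha>) powr b * ((\<alpha> + k + 1) / (\<alpha> + k)) powr b"
    using assms pos by (simp add: powr_telescope add_ac)
  also have "\<dots> \<le> pochhammer (\<alpha> + b) k / pochhammer \<alpha> k * (1 + b / (\<alpha> + k))"
    using Suc.IH order_trans[OF powr_ge_zero Suc.IH] powr_le_one_plus_div[OF pos assms(2,3)]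
    by (intro mult_mono) auto
  also have "\<dots> = pochhammer (\<alpha> + b) (Suc k) / pochhammer \<alpha> (Suc k)"
    using assms by (simp add: pochhammer_ratio_Suc)
  finally show ?case .
qed simp

lemma pochhammer_ratio_Suc_le_powr:
  fixes \<alpha> b :: real
  assumes "\<alpha> > 0" "0 \<le> b"
  shows "pochhammer (\<alpha> + b) (Suc k) / pochhammer \<alpha> (Suc k) \<le> (1 + b / \<alpha>) * ((\<alpha> + k) / \<alpha>) powr b"
proof (induction k)
  case 0
  then show ?case using assms by (simp add: pochhammer_ratio_Suc add_divide_distrib)
next
  case (Suc k)
  have pos: "\<alpha> + real k > 0"
    using assms by simp
  have "pochhammer (\<alpha> + b) (Suc (Suc k)) / pochhammer \<alpha> (Suc (Suc k))
      = pochhammer (\<alpha> + b) (Suc k) / pochhammer \<alpha> (Suc k) * (1 + b / (\<alpha> + k + 1))"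
    using assms by (simp add: pochhammer_ratio_Suc add.assoc)
  also have "\<dots> \<le> (1 + b / \<alpha>) * ((\<alpha> + k) / \<alpha>) powr b * ((\<alpha> + k + 1) / (\<alpha> + k)) powr b"
    using Suc.IH one_plus_div_Suc_le_powr[OF pos assms(2)] assms
    by (intro mult_mono) auto
  also have "\<dots> = (1 + b / \<alpha>) * ((\<alpha> + Suc k) / \<alpha>) powr b"
    using assms pos by (simp add: powr_telescope mult.assoc add_ac)
  finally show ?case .
qed

lemma pochhammer_ratio_le_powr:
  fixes \<alpha> b :: real
  assumes "1/2 \<le> \<alpha>" "\<alpha> \<le> 1" "0 \<le> b" "b \<le> 2"
  shows "pochhammer (\<alpha> + b) k / pochhammer \<alpha> k \<le> 20 * (real k + 1) powr b"
proof (cases k)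
  case 0
  then show ?thesis by simp
next
  case (Suc m)
  have "(\<alpha> + m) / \<alpha> \<le> 2 * (real k + 1)"
    using assms Suc mult_right_mono[of 1 "2 * \<alpha>" "real m"] by (simp add: field_simps)
  then have "((\<alpha> + m) / \<alpha>) powr b \<le> (2 * (real k + 1)) powr b"
    using assms by (intro powr_mono2) auto
  also have "\<dots> = 2 powr b * (real k + 1) powr b"
    by (rule powr_mult)
  also have "\<dots> \<le> 2 powr 2 * (real k + 1) powr b"
    using assms by (intro mult_right_mono powr_mono) auto
  finally have "((\<alpha> + m) / \<alpha>) powr b \<le> 4 * (real k + 1) powr b"
    by simp
  moreover have "1 + b / \<alpha> \<le> 5"
    using assms by (simp add: field_simps)
  ultimately have "(1 + b / \<alpha>) * ((\<alpha> + m) / \<alpha>) powr b \<le> 5 * (4 * (real k + 1) powr b)"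
    using assms by (intro mult_mono) auto
  then show ?thesis
    using pochhammer_ratio_Suc_le_powr[of \<alpha> b m] assms Suc by simp
qed

lemma half_powr_le_pochhammer_ratio:
  fixes \<alpha> b :: real
  assumes "1/2 \<le> \<alpha>" "\<alpha> \<le> 1" "0 \<le> b" "b \<le> 2"
  shows "(real k + 1) powr b / 2 \<le> pochhammer (\<alpha> + b) k / pochhammer \<alpha> k"
proof -
  have k_le: "real k + 1 \<le> (\<alpha> + k) / \<alpha>"
    using assms mult_right_mono[of \<alpha> 1 "real k"] by (simp add: field_simps)
  show ?thesis
  proof (cases "b \<le> 1")
    case True
    have "(real k + 1) powr b \<le> ((\<alpha> + k) / \<alpha>) powr b"
      using k_le assms by (intro powr_mono2) auto
    also have "\<dots> \<le> pochhammer (\<alpha> + b) k / pochhammer \<alpha> k"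
      using assms True by (intro powr_le_pochhammer_ratio) auto
    finally show ?thesis
      using powr_ge_zero[of "real k + 1" b] by linarith
  next
    case False
    \<comment> \<open>Shifting \<open>\<alpha>\<close> by one trades one unit of \<open>b\<close> for the factor \<open>(\<alpha> + k) / \<alpha>\<close>.\<close>
    have "pochhammer (\<alpha> + b) k / pochhammer \<alpha> k
        = pochhammer (\<alpha> + b) k / pochhammer (\<alpha> + 1) k * (pochhammer (\<alpha> + 1) k / pochhammer \<alpha> k)"
      using assms pochhammer_pos[of "\<alpha> + 1" k] by simp
    moreover have "pochhammer (\<alpha> + 1) k / pochhammer \<alpha> k = (\<alpha> + k) / \<alpha>"
      using assms by (intro pochhammer_add_one_ratio) simp
    moreover have "(\<alpha> + 1) + (b - 1) = \<alpha> + b"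
      by simp
    ultimately have split: "pochhammer (\<alpha> + b) k / pochhammer \<alpha> k
        = pochhammer ((\<alpha> + 1) + (b - 1)) k / pochhammer (\<alpha> + 1) k * ((\<alpha> + k) / \<alpha>)"
      by simp
    have "(real k + 1) powr (b - 1) / 2 \<le> (real k + 1) powr (b - 1) / 2 powr (b - 1)"
      using assms powr_mono[of "b - 1" 1 2] by (intro divide_left_mono) auto
    also have "\<dots> = ((real k + 1) / 2) powr (b - 1)"
      by (simp add: powr_divide)
    also have "\<dots> \<le> (((\<alpha> + 1) + k) / (\<alpha> + 1)) powr (b - 1)"
      using assms False mult_right_mono[of \<alpha> 1 "real k"] by (intro powr_mono2) (auto simp: field_simps)
    also have "\<dots> \<le> pochhammer ((\<alpha> + 1) + (b - 1)) k / pochhammer (\<alpha> + 1) k"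
      using assms False by (intro powr_le_pochhammer_ratio) auto
    finally have shifted: "(real k + 1) powr (b - 1) / 2
        \<le> pochhammer ((\<alpha> + 1) + (b - 1)) k / pochhammer (\<alpha> + 1) k" .
    have "(real k + 1) powr b / 2 = (real k + 1) powr (b - 1) / 2 * (real k + 1)"
      by (simp add: powr_diff field_simps)
    also have "\<dots> \<le> pochhammer ((\<alpha> + 1) + (b - 1)) k / pochhammer (\<alpha> + 1) k * ((\<alpha> + k) / \<alpha>)"
      using shifted k_le assms pochhammer_pos[of "\<alpha> + b" k] pochhammer_pos[of "\<alpha> + 1" k]
      by (intro mult_mono) auto
    finally show ?thesis
      unfolding split .
  qed
qed

lemma kummerM_bounds:
  fixes \<alpha> \<beta> y :: real
  assumes "1/2 \<le> \<alpha>" "\<alpha> \<le> 1" "-2 \<le> \<beta>" "\<beta> \<le> 0" "y \<le> -1"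
  shows "(-y) powr (-\<beta>) / 4 \<le> kummerM \<beta> \<alpha> y"
    and "kummerM \<beta> \<alpha> y \<le> 120 * (-y) powr (-\<beta>)"
proof -
  define x where "x = -y"
  define b where "b = -\<beta>"
  define E where "E k = x ^ k / fact k" for k
  have x: "1 \<le> x" and b: "0 \<le> b" "b \<le> 2"
    using assms by (simp_all add: x_def b_def)
  have E: "0 \<le> E k" for k
    using x by (simp add: E_def)
  have series: "(\<lambda>k. pochhammer (\<alpha> + b) k / pochhammer \<alpha> k * E k) sums (exp x * kummerM \<beta> \<alpha> y)"
    using kummer_transformation_sums[of \<alpha> \<beta> y] assms by (simp add: x_def b_def E_def)
  have poisson: "(\<lambda>k. (real k + 1) powr b * E k) sums (\<Sum>k. (real k + 1) powr b * E k)"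
    using summable_exp_series_powr[of x b] x b by (simp add: E_def summable_sums)
  have coeff_le: "pochhammer (\<alpha> + b) k / pochhammer \<alpha> k \<le> 20 * (real k + 1) powr b" for k
    using assms b by (intro pochhammer_ratio_le_powr) auto
  have "pochhammer (\<alpha> + b) k / pochhammer \<alpha> k * E k \<le> 20 * ((real k + 1) powr b * E k)" for k
    using mult_right_mono[OF coeff_le E] by (simp only: mult.assoc)
  then have "exp x * kummerM \<beta> \<alpha> y \<le> 20 * (\<Sum>k. (real k + 1) powr b * E k)"
    by (rule sums_le[OF _ series sums_mult[OF poisson]])
  also have "\<dots> \<le> 20 * (6 * x powr b * exp x)"
    using exp_series_powr_le[OF x b] by (simp add: E_def mult_ac)
  finally show "kummerM \<beta> \<alpha> y \<le> 120 * (-y) powr (-\<beta>)"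
    by (simp add: x_def b_def)
  have "x powr b * exp x / 4 \<le> 1 / 2 * (\<Sum>k. (real k + 1) powr b * E k)"
    using exp_series_powr_ge[OF x b] by (simp add: E_def mult_ac)
  also have "\<dots> \<le> exp x * kummerM \<beta> \<alpha> y"
  proof (rule sums_le[OF _ sums_mult[OF poisson] series])
    fix k
    have "(real k + 1) powr b / 2 \<le> pochhammer (\<alpha> + b) k / pochhammer \<alpha> k"
      using assms b by (intro half_powr_le_pochhammer_ratio) auto
    from mult_right_mono[OF this E]
    show "1 / 2 * ((real k + 1) powr b * E k) \<le> pochhammer (\<alpha> + b) k / pochhammer \<alpha> k * E k"
      by simp
  qed
  finally show "(-y) powr (-\<beta>) / 4 \<le> kummerM \<beta> \<alpha> y"
    by (simp add: x_def b_def mult.commute)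
qed

theorem lemma4p8:
  fixes n :: nat
  assumes "n \<ge> 2"
  shows "\<exists>C>0. \<forall>\<beta> y :: real.
    \<beta> \<le> 0 \<and> (1 - 1 / real n) - \<beta> - 1 \<le> 1 \<and> y \<le> -1 \<longrightarrow>
      (exp y * (-y) powr (\<beta> - (1 - 1 / real n)) / C \<le> tricomiT \<beta> (1 - 1 / real n) y \<and>
       tricomiT \<beta> (1 - 1 / real n) y \<le> exp y * (-y) powr (\<beta> - (1 - 1 / real n)) \<and>
       (-y) powr (-\<beta>) / C \<le> kummerM \<beta> (1 - 1 / real n) y \<and>
       kummerM \<beta> (1 - 1 / real n) y \<le> C * (-y) powr (-\<beta>))"
proof (intro exI[of _ 120] conjI allI impI)
  define \<alpha> where "\<alpha> = 1 - 1 / real n"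
  have \<alpha>: "1/2 \<le> \<alpha>" "\<alpha> \<le> 1"
    using assms by (simp_all add: \<alpha>_def field_simps)
  fix \<beta> y :: real
  assume "\<beta> \<le> 0 \<and> (1 - 1 / real n) - \<beta> - 1 \<le> 1 \<and> y \<le> -1"
  then have \<beta>: "\<beta> \<le> 0" "\<alpha> - \<beta> \<le> 2" and y: "y \<le> -1"
    by (simp_all add: \<alpha>_def)
  have "exp y * (-y) powr (\<beta> - \<alpha>) / 120 \<le> exp y * (-y) powr (\<beta> - \<alpha>) / 16"
    by (simp add: divide_left_mono)
  also have "\<dots> \<le> tricomiT \<beta> \<alpha> y"
    using \<alpha> \<beta> y by (intro tricomiT_lower_bound) auto
  finally show "exp y * (-y) powr (\<beta> - (1 - 1 / real n)) / 120 \<le> tricomiT \<beta> (1 - 1 / real n) y"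
    by (simp add: \<alpha>_def)
  show "tricomiT \<beta> (1 - 1 / real n) y \<le> exp y * (-y) powr (\<beta> - (1 - 1 / real n))"
    using tricomiT_bounds(2)[of \<beta> \<alpha> y] \<alpha> \<beta> y by (simp add: \<alpha>_def)
  have M: "(-y) powr (-\<beta>) / 4 \<le> kummerM \<beta> \<alpha> y" "kummerM \<beta> \<alpha> y \<le> 120 * (-y) powr (-\<beta>)"
    using kummerM_bounds[of \<alpha> \<beta> y] \<alpha> \<beta> y by auto
  then show "(-y) powr (-\<beta>) / 120 \<le> kummerM \<beta> (1 - 1 / real n) y"
    using powr_ge_zero[of "-y" "-\<beta>"] by (simp add: \<alpha>_def)
  show "kummerM \<beta> (1 - 1 / real n) y \<le> 120 * (-y) powr (-\<beta>)"
    using M by (simp add: \<alpha>_def)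
qed (simp)

end
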